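(* Let $f\colon X\to X$ be an expansive homeomorphism of a compact metric space $X$. Then there are $\delta>0$ and a continuous function $\mathcal L\colon\mathcal K_\delta(X)\to\mathbb{R}$ such that: 1. $\mathcal L(A)\ge0$ for all $A\in\mathcal K_\delta(X)$, with equality if and only if $A$ is a singleton; 2. $\ddot{\mathcal L}=\mathcal L$, i.e. $\mathcal L(f(A))-2\mathcal L(A)+\mathcal L(f^{-1}(A))=\mathcal L(A)$ whenever $f(A),A,f^{-1}(A)\in\mathcal K_\delta(X)$.
   Context: A homeomorphism $f$ of a compact metric space $(X,\operatorname{dist})$ is expansive if there is $\delta>0$ such that $\operatorname{dist}(f^n(x),f^n(y))\le\delta$ for all $n\in\mathbb{Z}$ implies $x=y$. $\mathcal K(X)$ is the space of nonempty compact subsets of $X$ with the Hausdorff distance, and $\mathcal K_\delta(X)=\{A\in\mathcal K(X):\operatorname{diam}(A)\le\delta\}$. *)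

theory Defs
  imports "HOL-Analysis.Analysis"
begin

definition hausdist :: "'a::metric_space set \<Rightarrow> 'a set \<Rightarrow> real" where
  "hausdist A B = max (SUP a\<in>A. infdist a B) (SUP b\<in>B. infdist b A)"

definition hyperspace :: "'a::metric_space set \<Rightarrow> 'a set set" where
  "hyperspace X = {A. A \<subseteq> X \<and> A \<noteq> {} \<and> compact A}"

definition hyperspace_diam :: "real \<Rightarrow> 'a::metric_space set \<Rightarrow> 'a set set" where
  "hyperspace_diam \<delta> X = {A \<in> hyperspace X. diameter A \<le> \<delta>}"

text \<open>Expansiveness of a homeomorphism f of X with inverse g:
  f^n for n \<ge> 0 and g^n = f^(-n) cover all integer iterates.\<close>
definition expansive_on :: "'a::metric_space set \<Rightarrow> ('a \<Rightarrow> 'a) \<Rightarrow> ('a \<Rightarrow> 'a) \<Rightarrow> bool" where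
  "expansive_on X f g \<longleftrightarrow> (\<exists>\<delta>>0. \<forall>x\<in>X. \<forall>y\<in>X.
      ((\<forall>n. dist ((f^^n) x) ((f^^n) y) \<le> \<delta>) \<and> (\<forall>n. dist ((g^^n) x) ((g^^n) y) \<le> \<delta>))
      \<longrightarrow> x = y)"

definition hcontinuous_on :: "'a::metric_space set set \<Rightarrow> ('a set \<Rightarrow> real) \<Rightarrow> bool" where
  "hcontinuous_on K L \<longleftrightarrow> (\<forall>A\<in>K. \<forall>e>0. \<exists>d>0. \<forall>B\<in>K. hausdist A B < d \<longrightarrow> \<bar>L B - L A\<bar> < e)"

end

theory Submission
  imports Defs
begin

text \<open>
  Let S(A) be the sum over n of q^n max 0 (diam f^n(A) - \<delta>), measuring how far the forward
  iterates of A exceed the expansivity constant \<delta>; let S' be the same sum for g = f^-1, and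
  put L = S + S'. By expansivity L(A) = 0 exactly for singletons, and L is continuous as a uniform
  limit of continuous partial sums. If A, f(A) and g(A) have diameter at most \<delta>, the term that
  appears or disappears under a shift vanishes, so S(f(A)) = S(A)/q and S(g(A)) = q S(A), and
  symmetrically for S'. Hence L(f(A)) + L(g(A)) = (q + 1/q) L(A), and q = (3 - \<surd>5)/2 makes
  q + 1/q = 3.
\<close>

lemma funpow_image_subset:
  assumes "f ` X \<subseteq> X"
  shows "(f^^n) ` X \<subseteq> X"
  using assms by (induction n) (auto simp: image_subset_iff)

lemma continuous_on_funpow:
  assumes "continuous_on X f" "f ` X \<subseteq> X"
  shows "continuous_on X (f^^n)"
proof (induction n)
  case (Suc n)
  then have "continuous_on X (f \<circ> f^^n)"
    using continuous_on_subset[OF assms(1) funpow_image_subset[OF assms(2)]]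
    by (rule continuous_on_compose)
  then show ?case by simp
qed simp

subsection \<open>Continuity with respect to the Hausdorff distance\<close>

lemma hcontinuous_on_subset:
  "hcontinuous_on K L \<Longrightarrow> K' \<subseteq> K \<Longrightarrow> hcontinuous_on K' L"
  unfolding hcontinuous_on_def by blast

lemma hcontinuous_on_const: "hcontinuous_on K (\<lambda>_. c)"
  unfolding hcontinuous_on_def by (auto intro: exI[of _ 1])

lemma hcontinuous_on_add:
  assumes L: "hcontinuous_on K L" and M: "hcontinuous_on K M"
  shows "hcontinuous_on K (\<lambda>A. L A + M A)"
  unfolding hcontinuous_on_def
proof (intro ballI allI impI)
  fix A and e :: real
  assume A: "A \<in> K" and e: "e > 0"
  obtain d1 where d1: "d1 > 0" "\<forall>B\<in>K. hausdist A B < d1 \<longrightarrow> \<bar>L B - L A\<bar> < e/2"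
    using L A e unfolding hcontinuous_on_def by (meson half_gt_zero)
  obtain d2 where d2: "d2 > 0" "\<forall>B\<in>K. hausdist A B < d2 \<longrightarrow> \<bar>M B - M A\<bar> < e/2"
    using M A e unfolding hcontinuous_on_def by (meson half_gt_zero)
  have "\<bar>L B + M B - (L A + M A)\<bar> < e" if "B \<in> K" "hausdist A B < min d1 d2" for B
  proof -
    have "\<bar>L B - L A\<bar> < e/2" "\<bar>M B - M A\<bar> < e/2" using d1(2) d2(2) that by auto
    then show ?thesis by linarith
  qed
  then show "\<exists>d>0. \<forall>B\<in>K. hausdist A B < d \<longrightarrow> \<bar>L B + M B - (L A + M A)\<bar> < e"
    using d1(1) d2(1) by (intro exI[of _ "min d1 d2"]) auto
qed

lemma hcontinuous_on_sum:
  "finite I \<Longrightarrow> (\<And>i. i \<in> I \<Longrightarrow> hcontinuous_on K (u i)) \<Longrightarrow>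
    hcontinuous_on K (\<lambda>A. \<Sum>i\<in>I. u i A)"
  by (induction I rule: finite_induct) (auto intro: hcontinuous_on_const hcontinuous_on_add)

lemma hcontinuous_on_compose:
  assumes \<phi>: "continuous_on UNIV \<phi>" and L: "hcontinuous_on K L"
  shows "hcontinuous_on K (\<lambda>A. \<phi> (L A))"
  unfolding hcontinuous_on_def
proof (intro ballI allI impI)
  fix A and e :: real
  assume A: "A \<in> K" and e: "e > 0"
  obtain d' where d': "d' > 0" "\<And>t. dist t (L A) < d' \<Longrightarrow> dist (\<phi> t) (\<phi> (L A)) < e"
    using \<phi> e unfolding continuous_on_iff by blast
  obtain d where "d > 0" "\<forall>B\<in>K. hausdist A B < d \<longrightarrow> \<bar>L B - L A\<bar> < d'"
    using L A d'(1) unfolding hcontinuous_on_def by blast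
  then show "\<exists>d>0. \<forall>B\<in>K. hausdist A B < d \<longrightarrow> \<bar>\<phi> (L B) - \<phi> (L A)\<bar> < e"
    using d'(2) by (auto simp: dist_real_def)
qed

lemma hcontinuous_on_uniform_limit:
  assumes F: "\<And>n. hcontinuous_on K (F n)" and lim: "uniform_limit K F L sequentially"
  shows "hcontinuous_on K L"
  unfolding hcontinuous_on_def
proof (intro ballI allI impI)
  fix A and e :: real
  assume A: "A \<in> K" and e: "e > 0"
  have e3: "e/3 > 0" using e by simp
  then have "\<forall>\<^sub>F n in sequentially. \<forall>B\<in>K. dist (F n B) (L B) < e/3"
    using lim unfolding uniform_limit_iff by blast
  then obtain n where n: "\<And>B. B \<in> K \<Longrightarrow> \<bar>F n B - L B\<bar> < e/3"
    unfolding eventually_sequentially dist_real_def by blast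
  obtain d where d: "d > 0" "\<forall>B\<in>K. hausdist A B < d \<longrightarrow> \<bar>F n B - F n A\<bar> < e/3"
    using F[of n] A e3 unfolding hcontinuous_on_def by blast
  have "\<bar>L B - L A\<bar> < e" if "B \<in> K" "hausdist A B < d" for B
  proof -
    have "\<bar>F n B - L B\<bar> < e/3" "\<bar>F n A - L A\<bar> < e/3" "\<bar>F n B - F n A\<bar> < e/3"
      using n A d(2) that by auto
    then show ?thesis by linarith
  qed
  then show "\<exists>d>0. \<forall>B\<in>K. hausdist A B < d \<longrightarrow> \<bar>L B - L A\<bar> < e"
    using d(1) by blast
qed

lemma hausdist_commute: "hausdist A B = hausdist B A"
  unfolding hausdist_def by (simp add: max.commute)

lemma infdist_le_hausdist:
  assumes "compact B" "b \<in> B"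
  shows "infdist b A \<le> hausdist A B"
proof -
  have "bdd_above ((\<lambda>b. infdist b A) ` B)"
    by (intro bounded_imp_bdd_above compact_imp_bounded compact_continuous_image
        continuous_on_infdist continuous_on_id assms)
  then have "infdist b A \<le> (SUP b\<in>B. infdist b A)"
    using assms(2) by (rule cSUP_upper2) simp
  then show ?thesis unfolding hausdist_def by linarith
qed

lemma infdist_less_obtains:
  assumes "infdist x A < d" "A \<noteq> {}"
  obtains a where "a \<in> A" "dist x a < d"
  using assms cInf_lessD[of "dist x ` A" d] by (auto simp: infdist_def)

lemma diameter_image_le_of_hausdist:
  assumes F: "continuous_on X F"
    and d: "\<And>x x'. x \<in> X \<Longrightarrow> x' \<in> X \<Longrightarrow> dist x x' < d \<Longrightarrow> dist (F x) (F x') < e"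
    and A: "A \<in> hyperspace X" and B: "B \<in> hyperspace X" and AB: "hausdist A B < d"
  shows "diameter (F ` B) \<le> diameter (F ` A) + 2 * e"
proof -
  have A': "compact A" "A \<subseteq> X" "A \<noteq> {}" and B': "compact B" "B \<subseteq> X" "B \<noteq> {}"
    using A B by (auto simp: hyperspace_def)
  have "compact (F ` A)" "compact (F ` B)"
    using A' B' F by (auto intro: compact_continuous_image continuous_on_subset)
  then obtain x y where xy: "x \<in> B" "y \<in> B" "dist (F x) (F y) = diameter (F ` B)"
    using diameter_compact_attained B'(3) by blast
  have near: "\<exists>x'\<in>A. dist (F x) (F x') < e" if "x \<in> B" for x
  proof -
    have "infdist x A < d" using infdist_le_hausdist[OF B'(1) that, of A] AB by linarith
    then obtain x' where "x' \<in> A" "dist x x' < d" using A'(3) by (rule infdist_less_obtains)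
    then show ?thesis using d that A'(2) B'(2) by blast
  qed
  obtain x' y' where "x' \<in> A" "y' \<in> A" "dist (F x) (F x') < e" "dist (F y) (F y') < e"
    using near xy(1,2) by blast
  moreover have "dist (F x') (F y') \<le> diameter (F ` A)"
    using \<open>compact (F ` A)\<close> \<open>x' \<in> A\<close> \<open>y' \<in> A\<close>
    by (intro diameter_bounded_bound compact_imp_bounded) auto
  moreover have "dist (F x) (F y) \<le> dist (F x) (F x') + dist (F x') (F y') + dist (F y) (F y')"
    using dist_triangle[of "F x" "F y" "F x'"] dist_triangle[of "F x'" "F y" "F y'"]
    by (simp add: dist_commute)
  ultimately show ?thesis using xy(3) by linarith
qed

lemma hcontinuous_on_diameter_image:
  assumes X: "compact X" and F: "continuous_on X F"
  shows "hcontinuous_on (hyperspace X) (\<lambda>A. diameter (F ` A))"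
  unfolding hcontinuous_on_def
proof (intro ballI allI impI)
  fix A and e :: real
  assume A: "A \<in> hyperspace X" and e: "e > 0"
  obtain d where d: "d > 0" "\<And>x x'. x \<in> X \<Longrightarrow> x' \<in> X \<Longrightarrow> dist x x' < d \<Longrightarrow> dist (F x) (F x') < e/3"
    using compact_uniformly_continuous[OF F X] e unfolding uniformly_continuous_on_def
    by (metis divide_pos_pos zero_less_numeral)
  have "\<bar>diameter (F ` B) - diameter (F ` A)\<bar> < e"
    if B: "B \<in> hyperspace X" and AB: "hausdist A B < d" for B
  proof -
    have BA: "hausdist B A < d" using AB by (simp add: hausdist_commute)
    show ?thesis
      using diameter_image_le_of_hausdist[OF F d(2) A B AB]
        diameter_image_le_of_hausdist[OF F d(2) B A BA] e by linarith
  qed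
  then show "\<exists>d>0. \<forall>B\<in>hyperspace X. hausdist A B < d \<longrightarrow> \<bar>diameter (F ` B) - diameter (F ` A)\<bar> < e"
    using d(1) by blast
qed

subsection \<open>Weighted excess of the iterated diameters\<close>

definition excess_series :: "('a::metric_space \<Rightarrow> 'a) \<Rightarrow> real \<Rightarrow> real \<Rightarrow> 'a set \<Rightarrow> real" where
  "excess_series f \<delta> q A = (\<Sum>n. q^n * max 0 (diameter ((f^^n) ` A) - \<delta>))"

lemma excess_term_bound:
  assumes "bounded X" "f ` X \<subseteq> X" "A \<subseteq> X" "0 \<le> q"
  shows "norm (q^n * max 0 (diameter ((f^^n) ` A) - \<delta>)) \<le> q^n * max 0 (diameter X - \<delta>)"
proof -
  have "(f^^n) ` A \<subseteq> X" using funpow_image_subset[OF assms(2)] assms(3) by blast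
  then have "diameter ((f^^n) ` A) \<le> diameter X" using assms(1) by (rule diameter_subset)
  then show ?thesis using assms(4) by (simp add: abs_mult mult_left_mono)
qed

lemma summable_excess_terms:
  assumes "bounded X" "f ` X \<subseteq> X" "A \<subseteq> X" "0 \<le> q" "q < 1"
  shows "summable (\<lambda>n. q^n * max 0 (diameter ((f^^n) ` A) - \<delta>))"
  using assms by (intro summable_comparison_test'[OF _ excess_term_bound])
    (auto intro: summable_mult2 summable_geometric)

lemma hcontinuous_on_excess_series:
  assumes X: "compact X" and f: "continuous_on X f" "f ` X \<subseteq> X" and q: "0 \<le> q" "q < 1"
  shows "hcontinuous_on (hyperspace X) (excess_series f \<delta> q)"
proof -
  let ?u = "\<lambda>n A. q^n * max 0 (diameter ((f^^n) ` A) - \<delta>)"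
  have "hcontinuous_on (hyperspace X) (?u n)" for n
    using hcontinuous_on_diameter_image[OF X continuous_on_funpow[OF f]]
    by (rule hcontinuous_on_compose[rotated]) (intro continuous_intros)
  then have "hcontinuous_on (hyperspace X) (\<lambda>A. \<Sum>n<N. ?u n A)" for N
    by (intro hcontinuous_on_sum) auto
  moreover have "uniform_limit (hyperspace X) (\<lambda>N A. \<Sum>n<N. ?u n A) (excess_series f \<delta> q) sequentially"
    unfolding excess_series_def[abs_def]
  proof (rule Weierstrass_m_test)
    show "norm (?u n A) \<le> q^n * max 0 (diameter X - \<delta>)" if "A \<in> hyperspace X" for n A
      using that X f(2) q(1) by (intro excess_term_bound compact_imp_bounded) (auto simp: hyperspace_def)
    show "summable (\<lambda>n. q^n * max 0 (diameter X - \<delta>))"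
      using q by (intro summable_mult2 summable_geometric) simp
  qed
  ultimately show ?thesis by (rule hcontinuous_on_uniform_limit)
qed

lemma excess_series_unfold:
  assumes "bounded X" "f ` X \<subseteq> X" "A \<subseteq> X" "0 \<le> q" "q < 1"
  shows "excess_series f \<delta> q A = max 0 (diameter A - \<delta>) + q * excess_series f \<delta> q (f ` A)"
proof -
  let ?c = "\<lambda>B n. q^n * max 0 (diameter ((f^^n) ` B) - \<delta>)"
  have "f ` A \<subseteq> X" using assms(2,3) by blast
  then have summable: "summable (?c A)" "summable (?c (f ` A))"
    using assms by (auto intro: summable_excess_terms)
  have shift: "?c A (Suc n) = q * ?c (f ` A) n" for n
    by (simp only: funpow_Suc_right image_comp power_Suc mult.assoc)
  have "(\<Sum>n. ?c A (Suc n)) = q * excess_series f \<delta> q (f ` A)"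
    unfolding shift suminf_mult[OF summable(2)] excess_series_def ..
  then show ?thesis
    using suminf_split_head[OF summable(1)] by (simp add: excess_series_def)
qed

lemma excess_series_nonneg:
  assumes "bounded X" "f ` X \<subseteq> X" "A \<subseteq> X" "0 \<le> q" "q < 1"
  shows "excess_series f \<delta> q A \<ge> 0"
  unfolding excess_series_def using summable_excess_terms[OF assms] assms(4)
  by (intro suminf_nonneg) auto

lemma excess_series_eq_0_iff:
  assumes "bounded X" "f ` X \<subseteq> X" "A \<subseteq> X" "0 < q" "q < 1"
  shows "excess_series f \<delta> q A = 0 \<longleftrightarrow> (\<forall>n. diameter ((f^^n) ` A) \<le> \<delta>)"
proof -
  have "excess_series f \<delta> q A = 0 \<longleftrightarrow> (\<forall>n. q^n * max 0 (diameter ((f^^n) ` A) - \<delta>) = 0)"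
    unfolding excess_series_def using summable_excess_terms[OF assms(1-3) _ assms(5)] assms(4)
    by (intro suminf_eq_zero_iff) auto
  moreover have "max 0 (x - \<delta>) = 0 \<longleftrightarrow> x \<le> \<delta>" for x :: real
    by linarith
  ultimately show ?thesis using assms(4) by simp
qed

lemma excess_series_images:
  assumes h: "homeomorphism X X f g" and X: "bounded X" and A: "A \<subseteq> X"
    and q: "0 < q" "q < 1" and diam: "diameter A \<le> \<delta>" "diameter (g ` A) \<le> \<delta>"
  shows "excess_series f \<delta> q (f ` A) + excess_series f \<delta> q (g ` A)
           = (1/q + q) * excess_series f \<delta> q A"
proof -
  have f: "f ` X \<subseteq> X" and g: "g ` X \<subseteq> X" and fg: "\<And>y. y \<in> X \<Longrightarrow> f (g y) = y"
    using h by (auto simp: homeomorphism_def)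
  have "f ` g ` A = A" using fg A by (force simp: image_image)
  moreover have "g ` A \<subseteq> X" using g A by blast
  ultimately have "excess_series f \<delta> q (g ` A) = q * excess_series f \<delta> q A"
    using excess_series_unfold[OF X f, of "g ` A"] q diam(2) by simp
  moreover have "excess_series f \<delta> q (f ` A) = excess_series f \<delta> q A / q"
    using excess_series_unfold[OF X f A, of q \<delta>] q diam(1) by simp
  ultimately show ?thesis using q by (simp add: field_simps)
qed

lemma singleton_if_orbit_diameters_le:
  assumes exp: "\<forall>x\<in>X. \<forall>y\<in>X. ((\<forall>n. dist ((f^^n) x) ((f^^n) y) \<le> \<delta>) \<and>
                 (\<forall>n. dist ((g^^n) x) ((g^^n) y) \<le> \<delta>)) \<longrightarrow> x = y"
    and X: "bounded X" and f: "f ` X \<subseteq> X" and g: "g ` X \<subseteq> X" and A: "A \<subseteq> X" "A \<noteq> {}"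
    and diam: "\<forall>n. diameter ((f^^n) ` A) \<le> \<delta>" "\<forall>n. diameter ((g^^n) ` A) \<le> \<delta>"
  shows "\<exists>x. A = {x}"
proof -
  have dist_le: "dist ((h^^n) x) ((h^^n) y) \<le> diameter ((h^^n) ` A)"
    if "h ` X \<subseteq> X" "x \<in> A" "y \<in> A" for h n x y
  proof (rule diameter_bounded_bound)
    show "bounded ((h^^n) ` A)"
      using funpow_image_subset[OF that(1)] A(1) X by (meson bounded_subset image_mono order.trans)
  qed (use that in auto)
  have "x = y" if "x \<in> A" "y \<in> A" for x y
    using exp A(1) that dist_le[OF f] dist_le[OF g] diam by (meson order.trans subsetD)
  then show ?thesis using A(2) by blast
qed

definition lyapunov :: "('a::metric_space \<Rightarrow> 'a) \<Rightarrow> ('a \<Rightarrow> 'a) \<Rightarrow> real \<Rightarrow> real \<Rightarrow> 'a set \<Rightarrow> real" where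
  "lyapunov f g \<delta> q A = excess_series f \<delta> q A + excess_series g \<delta> q A"

lemma hcontinuous_on_lyapunov:
  assumes "homeomorphism X X f g" "compact X" "0 \<le> q" "q < 1"
  shows "hcontinuous_on (hyperspace X) (lyapunov f g \<delta> q)"
  unfolding lyapunov_def using assms
  by (intro hcontinuous_on_add hcontinuous_on_excess_series) (auto simp: homeomorphism_def)

lemma lyapunov_nonneg:
  assumes "homeomorphism X X f g" "bounded X" "A \<subseteq> X" "0 \<le> q" "q < 1"
  shows "lyapunov f g \<delta> q A \<ge> 0"
  unfolding lyapunov_def using assms
  by (intro add_nonneg_nonneg excess_series_nonneg) (auto simp: homeomorphism_def)

lemma lyapunov_eq_0_iff:
  assumes exp: "\<forall>x\<in>X. \<forall>y\<in>X. ((\<forall>n. dist ((f^^n) x) ((f^^n) y) \<le> \<delta>) \<and>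
                 (\<forall>n. dist ((g^^n) x) ((g^^n) y) \<le> \<delta>)) \<longrightarrow> x = y"
    and h: "homeomorphism X X f g" and X: "bounded X" and A: "A \<subseteq> X" "A \<noteq> {}"
    and \<delta>: "0 \<le> \<delta>" and q: "0 < q" "q < 1"
  shows "lyapunov f g \<delta> q A = 0 \<longleftrightarrow> (\<exists>x. A = {x})"
proof -
  have f: "f ` X \<subseteq> X" and g: "g ` X \<subseteq> X" using h by (auto simp: homeomorphism_def)
  have "lyapunov f g \<delta> q A = 0 \<longleftrightarrow>
      (\<forall>n. diameter ((f^^n) ` A) \<le> \<delta>) \<and> (\<forall>n. diameter ((g^^n) ` A) \<le> \<delta>)"
    unfolding lyapunov_def
    using excess_series_nonneg[OF X f A(1)] excess_series_nonneg[OF X g A(1)]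
      excess_series_eq_0_iff[OF X f A(1) q] excess_series_eq_0_iff[OF X g A(1) q] q
    by (simp add: add_nonneg_eq_0_iff)
  also have "\<dots> \<longleftrightarrow> (\<exists>x. A = {x})"
    using singleton_if_orbit_diameters_le[OF exp X f g A] \<delta> by auto
  finally show ?thesis .
qed

lemma lyapunov_images:
  assumes h: "homeomorphism X X f g" and X: "bounded X" and A: "A \<subseteq> X" and q: "0 < q" "q < 1"
    and diam: "diameter (f ` A) \<le> \<delta>" "diameter A \<le> \<delta>" "diameter (g ` A) \<le> \<delta>"
  shows "lyapunov f g \<delta> q (f ` A) + lyapunov f g \<delta> q (g ` A) = (1/q + q) * lyapunov f g \<delta> q A"
  using excess_series_images[OF h X A q diam(2,3)]
    excess_series_images[OF homeomorphism_symD[OF h] X A q diam(2,1)]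
  unfolding lyapunov_def by (simp add: algebra_simps)

lemma exists_inverse_plus_eq_3: "\<exists>q::real. 0 < q \<and> q < 1 \<and> 1/q + q = 3"
proof (intro exI conjI)
  have "2 < sqrt (5::real)" "sqrt (5::real) < 3"
    by (simp_all add: real_less_rsqrt real_sqrt_less_iff[of 5 9, simplified])
  then show "0 < (3 - sqrt 5) / (2::real)" "(3 - sqrt 5) / 2 < (1::real)"
    by simp_all
  then show "1 / ((3 - sqrt 5) / 2) + (3 - sqrt 5) / 2 = (3::real)"
    by (simp add: field_simps)
qed

theorem mainTheorem17:
  fixes X :: "'a::metric_space set" and f g :: "'a \<Rightarrow> 'a"
  assumes "compact X"
    and "homeomorphism X X f g"
    and "expansive_on X f g"
  shows "\<exists>\<delta>>0. \<exists>L :: 'a set \<Rightarrow> real.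
           hcontinuous_on (hyperspace_diam \<delta> X) L
         \<and> (\<forall>A\<in>hyperspace_diam \<delta> X. L A \<ge> 0 \<and> (L A = 0 \<longleftrightarrow> (\<exists>x. A = {x})))
         \<and> (\<forall>A. f ` A \<in> hyperspace_diam \<delta> X \<and> A \<in> hyperspace_diam \<delta> X
                 \<and> g ` A \<in> hyperspace_diam \<delta> X
               \<longrightarrow> L (f ` A) - 2 * L A + L (g ` A) = L A)"
proof -
  note X = assms(1) compact_imp_bounded[OF assms(1)] and h = assms(2)
  obtain \<delta> :: real where \<delta>: "\<delta> > 0" and exp: "\<forall>x\<in>X. \<forall>y\<in>X.
      ((\<forall>n. dist ((f^^n) x) ((f^^n) y) \<le> \<delta>) \<and> (\<forall>n. dist ((g^^n) x) ((g^^n) y) \<le> \<delta>)) \<longrightarrow> x = y"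
    using assms(3) unfolding expansive_on_def by blast
  obtain q :: real where q: "0 < q" "q < 1" "1/q + q = 3"
    using exists_inverse_plus_eq_3 by blast
  have K: "A \<subseteq> X" "A \<noteq> {}" "diameter A \<le> \<delta>" if "A \<in> hyperspace_diam \<delta> X" for A
    using that by (auto simp: hyperspace_diam_def hyperspace_def)
  have "hcontinuous_on (hyperspace_diam \<delta> X) (lyapunov f g \<delta> q)"
    using hcontinuous_on_lyapunov[OF h X(1)] q
    by (rule_tac hcontinuous_on_subset) (auto simp: hyperspace_diam_def)
  moreover have "\<forall>A\<in>hyperspace_diam \<delta> X. lyapunov f g \<delta> q A \<ge> 0 \<and>
      (lyapunov f g \<delta> q A = 0 \<longleftrightarrow> (\<exists>x. A = {x}))"
    using lyapunov_nonneg[OF h X(2)] lyapunov_eq_0_iff[OF exp h X(2)] K \<delta> q by auto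
  moreover have "lyapunov f g \<delta> q (f ` A) - 2 * lyapunov f g \<delta> q A + lyapunov f g \<delta> q (g ` A)
      = lyapunov f g \<delta> q A"
    if "f ` A \<in> hyperspace_diam \<delta> X \<and> A \<in> hyperspace_diam \<delta> X \<and> g ` A \<in> hyperspace_diam \<delta> X" for A
    using lyapunov_images[OF h X(2) _ q(1,2)] that K q(3) by auto
  ultimately show ?thesis using \<delta> by blast
qed

end
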